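(* Let $\kappa$ be a regular infinite cardinal, $I$ a nonempty set, $(S,\Sigma_S)$ a $\kappa$-measurable space separating points. Let $\underline M=\langle M,\Sigma,(T_i)_{i\in I},\theta\rangle$ and $\underline N=\langle N,\Sigma^N,(T_i^N)_{i\in I},\theta^N\rangle$ be $\kappa$-type spaces on $S$ for player set $I$ and $f:M\to N$ a type morphism. Then for all $m\in M$, $D(f(m))=D(m)$, i.e., for every $\kappa$-expression $\varphi$, $f(m)\in\varphi^{\underline N}$ iff $m\in\varphi^{\underline M}$.
   Context: A $\kappa$-field on a nonempty set is a field closed under intersections of fewer than $\kappa$ members. $\Delta^\kappa(M,\Sigma)$: finitely additive probability measures on $(M,\Sigma)$ with the $\kappa$-field generated by $\{\mu:\mu(E)\ge p\}$. "Separating points": for $s\neq s'$ in $S$ some $E\in\Sigma_S$ contains $s$ but not $s'$. A $\kappa$-type space on $S$ for $I$ is $\langle M,\Sigma,(T_i)_{i\in I},\theta\rangle$ with $\Sigma$ a $\kappa$-field on nonempty $M$, each $T_i:M\to\Delta^\kappa(M,\Sigma)$ measurable with: $\{m':T_i(m')=T_i(m)\}\subseteq A\in\Sigma$ implies $T_i(m)(A)=1$; and $\theta:M\to S$ measurable. A type morphism $f:M\to N$ is measurable with $\theta(m)=\theta^N(f(m))$ and $T_i^N(f(m))(E)=T_i(m)(f^{-1}(E))$ for all $m$, $E\in\Sigma^N$, $i$. $\kappa$-expressions: least set containing each $E\in\Sigma_S$ and closed under $\neg$, $B_i^p$ ($i\in I$, $p\in[0,1]$), and conjunctions of fewer than $\kappa$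 (nonempty) expressions. Semantics: $E^{\underline M}=\theta^{-1}(E)$, complement, $(B_i^p\varphi)^{\underline M}=\{m:T_i(m)(\varphi^{\underline M})\ge p\}$, intersection. $D(m)=\{\varphi:m\in\varphi^{\underline M}\}$. *)

theory Defs
  imports Complex_Main
begin

definition lt_card :: "'a set \<Rightarrow> 'k rel \<Rightarrow> bool" where
  "lt_card A \<kappa> \<longleftrightarrow> (card_of A, \<kappa>) \<in> ordLess"

definition kfield :: "'k rel \<Rightarrow> 'a set \<Rightarrow> 'a set set \<Rightarrow> bool" where
  "kfield \<kappa> X F \<longleftrightarrow> X \<noteq> {} \<and> F \<subseteq> Pow X \<and> X \<in> F
     \<and> (\<forall>A\<in>F. X - A \<in> F)
     \<and> (\<forall>A\<in>F. \<forall>B\<in>F. A \<union> B \<in> F)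
     \<and> (\<forall>\<A>. \<A> \<subseteq> F \<and> \<A> \<noteq> {} \<and> lt_card \<A> \<kappa> \<longrightarrow> \<Inter>\<A> \<in> F)"

definition kfield_gen :: "'k rel \<Rightarrow> 'a set \<Rightarrow> 'a set set \<Rightarrow> 'a set set" where
  "kfield_gen \<kappa> X G = \<Inter>{F. kfield \<kappa> X F \<and> G \<subseteq> F}"

definition kmeasurable :: "'a set \<Rightarrow> 'a set set \<Rightarrow> 'b set \<Rightarrow> 'b set set \<Rightarrow> ('a \<Rightarrow> 'b) \<Rightarrow> bool" where
  "kmeasurable X FX Y FY f \<longleftrightarrow> f ` X \<subseteq> Y \<and> (\<forall>E\<in>FY. f -` E \<inter> X \<in> FX)"

(* finitely additive probability measures on (X, F); a measure is represented as a
   function on all sets which is 0 outside F (canonical representative) *)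
definition fa_prob :: "'a set \<Rightarrow> 'a set set \<Rightarrow> ('a set \<Rightarrow> real) set" where
  "fa_prob X F = {\<mu>. (\<forall>A\<in>F. 0 \<le> \<mu> A) \<and> \<mu> X = 1
      \<and> (\<forall>A\<in>F. \<forall>B\<in>F. A \<inter> B = {} \<longrightarrow> \<mu> (A \<union> B) = \<mu> A + \<mu> B)
      \<and> (\<forall>A. A \<notin> F \<longrightarrow> \<mu> A = 0)}"

definition Delta_field :: "'k rel \<Rightarrow> 'a set \<Rightarrow> 'a set set \<Rightarrow> ('a set \<Rightarrow> real) set set" where
  "Delta_field \<kappa> X F = kfield_gen \<kappa> (fa_prob X F)
      {{\<mu> \<in> fa_prob X F. \<mu> E \<ge> p} | E p. E \<in> F \<and> 0 \<le> p \<and> p \<le> 1}"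

definition separates_points :: "'s set \<Rightarrow> 's set set \<Rightarrow> bool" where
  "separates_points S F \<longleftrightarrow> (\<forall>s\<in>S. \<forall>s'\<in>S. s \<noteq> s' \<longrightarrow> (\<exists>E\<in>F. s \<in> E \<and> s' \<notin> E))"

definition ktype_space :: "'k rel \<Rightarrow> 's set \<Rightarrow> 's set set \<Rightarrow> 'i set \<Rightarrow>
    'm set \<Rightarrow> 'm set set \<Rightarrow> ('i \<Rightarrow> 'm \<Rightarrow> 'm set \<Rightarrow> real) \<Rightarrow> ('m \<Rightarrow> 's) \<Rightarrow> bool" where
  "ktype_space \<kappa> S SigS I M Sig T \<theta> \<longleftrightarrow>
     kfield \<kappa> M Sig
     \<and> (\<forall>i\<in>I. kmeasurable M Sig (fa_prob M Sig) (Delta_field \<kappa> M Sig) (T i))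
     \<and> (\<forall>i\<in>I. \<forall>m\<in>M. \<forall>A\<in>Sig. {m'\<in>M. T i m' = T i m} \<subseteq> A \<longrightarrow> T i m A = 1)
     \<and> kmeasurable M Sig S SigS \<theta>"

definition type_morphism :: "'i set \<Rightarrow>
    'm set \<Rightarrow> 'm set set \<Rightarrow> ('i \<Rightarrow> 'm \<Rightarrow> 'm set \<Rightarrow> real) \<Rightarrow> ('m \<Rightarrow> 's) \<Rightarrow>
    'n set \<Rightarrow> 'n set set \<Rightarrow> ('i \<Rightarrow> 'n \<Rightarrow> 'n set \<Rightarrow> real) \<Rightarrow> ('n \<Rightarrow> 's) \<Rightarrow>
    ('m \<Rightarrow> 'n) \<Rightarrow> bool" where
  "type_morphism I M Sig T \<theta> N SigN TN \<theta>N f \<longleftrightarrow>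
     kmeasurable M Sig N SigN f
     \<and> (\<forall>m\<in>M. \<theta> m = \<theta>N (f m))
     \<and> (\<forall>m\<in>M. \<forall>E\<in>SigN. \<forall>i\<in>I. TN i (f m) E = T i m (f -` E \<inter> M))"

(* syntax of expressions; conjunctions are indexed by subsets of the type 'x *)
datatype ('s, 'i, 'x) kexpr =
    Atom "'s set"
  | Neg "('s, 'i, 'x) kexpr"
  | Bel 'i real "('s, 'i, 'x) kexpr"
  | Conj "'x set" "'x \<Rightarrow> ('s, 'i, 'x) kexpr"

inductive kexpr_wf :: "'k rel \<Rightarrow> 's set set \<Rightarrow> 'i set \<Rightarrow> ('s, 'i, 'x) kexpr \<Rightarrow> bool"
  for \<kappa> SigS I where
  "E \<in> SigS \<Longrightarrow> kexpr_wf \<kappa> SigS I (Atom E)"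
| "kexpr_wf \<kappa> SigS I \<phi> \<Longrightarrow> kexpr_wf \<kappa> SigS I (Neg \<phi>)"
| "i \<in> I \<Longrightarrow> 0 \<le> p \<Longrightarrow> p \<le> 1 \<Longrightarrow> kexpr_wf \<kappa> SigS I \<phi> \<Longrightarrow> kexpr_wf \<kappa> SigS I (Bel i p \<phi>)"
| "A \<noteq> {} \<Longrightarrow> lt_card A \<kappa> \<Longrightarrow> (\<forall>x\<in>A. kexpr_wf \<kappa> SigS I (F x)) \<Longrightarrow> kexpr_wf \<kappa> SigS I (Conj A F)"

primrec ksem :: "'m set \<Rightarrow> ('i \<Rightarrow> 'm \<Rightarrow> 'm set \<Rightarrow> real) \<Rightarrow> ('m \<Rightarrow> 's) \<Rightarrow>
    ('s, 'i, 'x) kexpr \<Rightarrow> 'm set" where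
  "ksem M T \<theta> (Atom E) = \<theta> -` E \<inter> M"
| "ksem M T \<theta> (Neg \<phi>) = M - ksem M T \<theta> \<phi>"
| "ksem M T \<theta> (Bel i p \<phi>) = {m \<in> M. T i m (ksem M T \<theta> \<phi>) \<ge> p}"
| "ksem M T \<theta> (Conj A F) = M \<inter> (\<Inter>x\<in>A. ksem M T \<theta> (F x))"

definition kdesc :: "'k rel \<Rightarrow> 's set set \<Rightarrow> 'i set \<Rightarrow> 'm set \<Rightarrow>
    ('i \<Rightarrow> 'm \<Rightarrow> 'm set \<Rightarrow> real) \<Rightarrow> ('m \<Rightarrow> 's) \<Rightarrow> 'm \<Rightarrow> ('s, 'i, 'x) kexpr set" where
  "kdesc \<kappa> SigS I M T \<theta> m = {\<phi>. kexpr_wf \<kappa> SigS I \<phi> \<and> m \<in> ksem M T \<theta> \<phi>}"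

end

theory Submission
  imports Defs
begin

text \<open>
  By induction on a \<open>\<kappa>\<close>-expression \<open>\<phi>\<close>, every \<open>\<phi>\<^sup>N\<close> is measurable and
  \<open>f\<^sup>-\<^sup>1(\<phi>\<^sup>N) = \<phi>\<^sup>M\<close>. Measurability is what lets the defining equation
  \<open>T\<^sub>i\<^sup>N(f m)(E) = T\<^sub>i(m)(f\<^sup>-\<^sup>1 E)\<close> of a type morphism be applied to \<open>E = \<phi>\<^sup>N\<close> in the
  belief case; conjunctions stay measurable because an image of fewer than \<open>\<kappa>\<close> sets
  has fewer than \<open>\<kappa>\<close> members.
\<close>

lemma lt_card_image: "lt_card A \<kappa> \<Longrightarrow> lt_card (g ` A) \<kappa>"
  unfolding lt_card_def using card_of_image ordLeq_ordLess_trans by blast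

lemma kfield_Diff: "kfield \<kappa> X F \<Longrightarrow> A \<in> F \<Longrightarrow> X - A \<in> F"
  unfolding kfield_def by blast

lemma kfield_INT:
  assumes "kfield \<kappa> X F" and "A \<noteq> {}" and "lt_card A \<kappa>" and "\<And>x. x \<in> A \<Longrightarrow> B x \<in> F"
  shows "(\<Inter>x\<in>A. B x) \<in> F"
proof -
  have "\<forall>\<A>. \<A> \<subseteq> F \<and> \<A> \<noteq> {} \<and> lt_card \<A> \<kappa> \<longrightarrow> \<Inter>\<A> \<in> F"
    using assms(1) unfolding kfield_def by (elim conjE)
  moreover have "B ` A \<subseteq> F" and "B ` A \<noteq> {}" and "lt_card (B ` A) \<kappa>"
    using assms(2-4) lt_card_image by auto
  ultimately show ?thesis by blast
qed

lemma kfield_gen_superset: "G \<subseteq> kfield_gen \<kappa> X G"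
  unfolding kfield_gen_def by blast

lemma Delta_field_atLeast:
  assumes "E \<in> F" and "0 \<le> p" and "p \<le> 1"
  shows "{\<mu> \<in> fa_prob X F. \<mu> E \<ge> p} \<in> Delta_field \<kappa> X F"
  unfolding Delta_field_def using assms by (blast intro: subsetD[OF kfield_gen_superset])

lemma ksem_subset: "ksem M T \<theta> \<phi> \<subseteq> M"
  by (induction \<phi>) auto

lemma ksem_Conj_eq_INT:
  assumes "A \<noteq> {}"
  shows "ksem M T \<theta> (Conj A F) = (\<Inter>x\<in>A. ksem M T \<theta> (F x))"
  using assms ksem_subset by fastforce

lemma ksem_in_field:
  assumes "kexpr_wf \<kappa> SigS I \<phi>" and M: "ktype_space \<kappa> S SigS I M Sig T \<theta>"
  shows "ksem M T \<theta> \<phi> \<in> Sig"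
  using assms(1)
proof (induction rule: kexpr_wf.induct)
  have Sig: "kfield \<kappa> M Sig" using M unfolding ktype_space_def by blast
  {
    case (1 E)
    then show ?case using M unfolding ktype_space_def kmeasurable_def by simp
  next
    case (2 \<phi>)
    then show ?case using Sig by (simp add: kfield_Diff)
  next
    case (3 i p \<phi>)
    let ?G = "{\<mu> \<in> fa_prob M Sig. \<mu> (ksem M T \<theta> \<phi>) \<ge> p}"
    have T_i: "kmeasurable M Sig (fa_prob M Sig) (Delta_field \<kappa> M Sig) (T i)"
      using M 3 unfolding ktype_space_def by blast
    have "?G \<in> Delta_field \<kappa> M Sig"
      using 3 by (intro Delta_field_atLeast) auto
    then have "T i -` ?G \<inter> M \<in> Sig"
      using T_i unfolding kmeasurable_def by blast
    moreover have "ksem M T \<theta> (Bel i p \<phi>) = T i -` ?G \<inter> M"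
      using T_i unfolding kmeasurable_def by auto
    ultimately show ?case by simp
  next
    case (4 A F)
    then show ?case
      unfolding ksem_Conj_eq_INT[OF \<open>A \<noteq> {}\<close>] using Sig by (intro kfield_INT) auto
  }
qed

lemma vimage_ksem_type_morphism:
  assumes "kexpr_wf \<kappa> SigS I \<phi>"
    and N: "ktype_space \<kappa> S SigS I N SigN TN \<theta>N"
    and f: "type_morphism I M Sig T \<theta> N SigN TN \<theta>N f"
  shows "f -` ksem N TN \<theta>N \<phi> \<inter> M = ksem M T \<theta> \<phi>"
  using assms(1)
proof (induction rule: kexpr_wf.induct)
  have f_into: "f ` M \<subseteq> N" and f_\<theta>: "\<forall>m\<in>M. \<theta> m = \<theta>N (f m)"
    and f_T: "\<forall>m\<in>M. \<forall>E\<in>SigN. \<forall>i\<in>I. TN i (f m) E = T i m (f -` E \<inter> M)"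
    using f unfolding type_morphism_def kmeasurable_def by auto
  {
    case (1 E)
    then show ?case using f_into f_\<theta> by auto
  next
    case (2 \<phi>)
    have "f -` (N - ksem N TN \<theta>N \<phi>) \<inter> M = M - (f -` ksem N TN \<theta>N \<phi> \<inter> M)"
      using f_into by auto
    then show ?case using 2 by simp
  next
    case (3 i p \<phi>)
    have "ksem N TN \<theta>N \<phi> \<in> SigN"
      using ksem_in_field[OF 3(4) N] .
    then have "TN i (f m) (ksem N TN \<theta>N \<phi>) = T i m (ksem M T \<theta> \<phi>)" if "m \<in> M" for m
      using f_T that 3 by simp
    then show ?case using f_into by auto
  next
    case (4 A F)
    have "f -` (\<Inter>x\<in>A. ksem N TN \<theta>N (F x)) \<inter> M = (\<Inter>x\<in>A. f -` ksem N TN \<theta>N (F x) \<inter> M)"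
      using \<open>A \<noteq> {}\<close> by auto
    also have "\<dots> = (\<Inter>x\<in>A. ksem M T \<theta> (F x))"
      using 4 by simp
    finally show ?case
      by (simp only: ksem_Conj_eq_INT[OF \<open>A \<noteq> {}\<close>])
  }
qed

theorem proposition2:
  fixes \<kappa> :: "'k rel" and S :: "'s set" and SigS :: "'s set set" and I :: "'i set"
    and M :: "'m set" and Sig :: "'m set set" and T :: "'i \<Rightarrow> 'm \<Rightarrow> 'm set \<Rightarrow> real"
    and \<theta> :: "'m \<Rightarrow> 's"
    and N :: "'n set" and SigN :: "'n set set" and TN :: "'i \<Rightarrow> 'n \<Rightarrow> 'n set \<Rightarrow> real"
    and \<theta>N :: "'n \<Rightarrow> 's" and f :: "'m \<Rightarrow> 'n"
  assumes "Card_order \<kappa>" and "infinite (Field \<kappa>)" and "regularCard \<kappa>"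
    and "I \<noteq> {}"
    and "kfield \<kappa> S SigS" and "separates_points S SigS"
    and "ktype_space \<kappa> S SigS I M Sig T \<theta>"
    and "ktype_space \<kappa> S SigS I N SigN TN \<theta>N"
    and "type_morphism I M Sig T \<theta> N SigN TN \<theta>N f"
  shows "\<forall>m\<in>M. (kdesc \<kappa> SigS I N TN \<theta>N (f m) :: ('s, 'i, 'x) kexpr set)
                 = kdesc \<kappa> SigS I M T \<theta> m"
proof (intro ballI set_eqI)
  fix m and \<phi> :: "('s, 'i, 'x) kexpr"
  assume "m \<in> M"
  then have "f m \<in> ksem N TN \<theta>N \<phi> \<longleftrightarrow> m \<in> f -` ksem N TN \<theta>N \<phi> \<inter> M"
    by simp
  then have "kexpr_wf \<kappa> SigS I \<phi> \<Longrightarrow> f m \<in> ksem N TN \<theta>N \<phi> \<longleftrightarrow> m \<in> ksem M T \<theta> \<phi>"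
    by (simp add: vimage_ksem_type_morphism[OF _ assms(8,9)])
  then show "\<phi> \<in> kdesc \<kappa> SigS I N TN \<theta>N (f m) \<longleftrightarrow> \<phi> \<in> kdesc \<kappa> SigS I M T \<theta> m"
    unfolding kdesc_def by auto
qed

end
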